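(* Let $E$ be an entire function in $\overline{HB}$ and let $f\in\mathcal{H}^\infty(E)$ satisfy $\lVert f/E\rVert_\infty\le 1$. Then $f - \lambda E\in\overline{HB}$ for every complex number $\lambda$ with $\lvert\lambda\rvert\ge 1$.
   Context: $\overline{HB}$ denotes the class of entire functions $E$ satisfying $\lvert E(\overline z)\rvert\le\lvert E(z)\rvert$ for all $z$ in the upper half-plane $\mathbb{C}_+$. For an entire $g$, $g^{\#}(z)=\overline{g(\overline z)}$. $\mathcal{H}^\infty(E)$ is the set of entire $f$ such that $f/E$ and $f^{\#}/E$ are bounded analytic functions on $\mathbb{C}_+$, and $\lVert f/E\rVert_\infty=\sup_{x\in\mathbb{R}}\lvert f(x)/E(x)\rvert$. *)

theory Defs
  imports "HOL-Complex_Analysis.Complex_Analysis"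
begin

definition upper_half_plane :: "complex set" where
  "upper_half_plane = {z. Im z > 0}"

definition entire :: "(complex \<Rightarrow> complex) \<Rightarrow> bool" where
  "entire f \<longleftrightarrow> f holomorphic_on UNIV"

definition HBbar :: "(complex \<Rightarrow> complex) set" where
  "HBbar = {E. entire E \<and> (\<forall>z\<in>upper_half_plane. norm (E (cnj z)) \<le> norm (E z))}"

definition sharp :: "(complex \<Rightarrow> complex) \<Rightarrow> complex \<Rightarrow> complex" where
  "sharp g = (\<lambda>z. cnj (g (cnj z)))"

definition bounded_analytic_quotient ::
    "(complex \<Rightarrow> complex) \<Rightarrow> (complex \<Rightarrow> complex) \<Rightarrow> bool" where
  "bounded_analytic_quotient h E \<longleftrightarrow>
     (\<exists>g. g holomorphic_on upper_half_plane \<and> bounded (g ` upper_half_plane) \<and>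
          (\<forall>z\<in>upper_half_plane. h z = g z * E z))"

definition Hinf :: "(complex \<Rightarrow> complex) \<Rightarrow> (complex \<Rightarrow> complex) set" where
  "Hinf E = {f. entire f \<and> bounded_analytic_quotient f E \<and>
                bounded_analytic_quotient (sharp f) E}"

end

theory Submission
  imports Defs
begin

text \<open>
  The tool is the Phragmen-Lindelof principle for the upper half-plane: a function continuous on
  the closed half-plane, holomorphic and bounded inside, and of modulus at most 1 on the real
  axis has modulus at most 1 everywhere (divide by the damping factor \<open>1 - i \<epsilon> z\<close> and apply
  the maximum modulus principle on large half-discs).

  Applied to the quotients \<open>f / E\<close> and \<open>f\<^sup># / E\<close>, whose singularities at zeros of \<open>E\<close> are
  removable because the quotients are bounded, it gives \<open>|f| \<le> |E|\<close> and \<open>|f\<^sup>#| \<le> |E|\<close> on the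
  upper half-plane. For \<open>|\<lambda>| > 1\<close> the function \<open>F = f - \<lambda> E\<close> then satisfies
  \<open>|F\<^sup>#| \<le> (1 + |\<lambda>|) |E| \<le> (1 + |\<lambda>|) / (|\<lambda>| - 1) |F|\<close> there, and \<open>|F\<^sup>#| = |F|\<close> on the real
  axis, so the principle applied to \<open>F\<^sup># / F\<close> yields \<open>|F\<^sup>#| \<le> |F|\<close>, i.e. \<open>F \<in> HB\<close>-bar.
  The case \<open>|\<lambda>| = 1\<close> follows by letting \<open>(1 + 1/n) \<lambda>\<close> tend to \<open>\<lambda>\<close>.
\<close>

lemma maximum_modulus_upper_half_plane_outside_ball:
  fixes \<psi> :: "complex \<Rightarrow> complex" and R :: real
  assumes cont: "continuous_on {z. Im z \<ge> 0} \<psi>"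
    and holo: "\<psi> holomorphic_on {z. Im z > 0}"
    and real_axis: "\<And>z. Im z = 0 \<Longrightarrow> norm (\<psi> z) \<le> 1"
    and far: "\<And>z. Im z > 0 \<Longrightarrow> R \<le> norm z \<Longrightarrow> norm (\<psi> z) \<le> 1"
    and z0: "Im z0 > 0"
  shows "norm (\<psi> z0) \<le> 1"
proof (cases "R \<le> norm z0")
  case False
  define S where "S = {z. Im z > 0} \<inter> ball 0 R"
  have S_open: "open S"
    unfolding S_def by (intro open_Int open_halfspace_Im_gt open_ball)
  have S_closure: "closure S \<subseteq> {z. Im z \<ge> 0} \<inter> cball 0 R"
    unfolding S_def by (intro closure_minimal) (auto intro!: closed_Int closed_halfspace_Im_ge)
  show ?thesis
  proof (rule maximum_modulus_frontier[where S = S and f = \<psi>])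
    show "\<psi> holomorphic_on interior S"
      unfolding interior_open[OF S_open] by (rule holomorphic_on_subset[OF holo]) (auto simp: S_def)
    show "continuous_on (closure S) \<psi>"
      using S_closure by (intro continuous_on_subset[OF cont]) auto
    show "bounded S" "z0 \<in> S"
      using z0 False by (auto simp: S_def)
  next
    fix z assume "z \<in> frontier S"
    then have "z \<in> closure S" "z \<notin> S"
      using frontier_def interior_open[OF S_open] by auto
    then have "Im z = 0 \<or> Im z > 0 \<and> R \<le> norm z"
      using S_closure by (auto simp: S_def)
    then show "norm (\<psi> z) \<le> 1"
      using real_axis far by blast
  qed
qed (use far z0 in blast)

lemma one_le_norm_one_minus_ii_mult:
  fixes \<epsilon> :: real
  assumes "\<epsilon> \<ge> 0" and "Im z \<ge> 0"
  shows "1 \<le> norm (1 - \<i> * \<epsilon> * z)"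
proof -
  have "1 \<le> Re (1 - \<i> * \<epsilon> * z)"
    using assms by simp
  then show ?thesis
    using complex_Re_le_cmod by (rule order_trans)
qed

lemma phragmen_lindelof_upper_half_plane_damped:
  fixes \<phi> :: "complex \<Rightarrow> complex" and M \<epsilon> :: real
  assumes cont: "continuous_on {z. Im z \<ge> 0} \<phi>"
    and holo: "\<phi> holomorphic_on {z. Im z > 0}"
    and bnd: "\<And>z. Im z > 0 \<Longrightarrow> norm (\<phi> z) \<le> M"
    and real_axis: "\<And>z. Im z = 0 \<Longrightarrow> norm (\<phi> z) \<le> 1"
    and \<epsilon>: "\<epsilon> > 0" and z0: "Im z0 > 0"
  shows "norm (\<phi> z0) \<le> norm (1 - \<i> * \<epsilon> * z0)"
proof -
  define d where "d = (\<lambda>z. 1 - \<i> * \<epsilon> * z)"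
  have d_ge_1: "1 \<le> norm (d z)" if "Im z \<ge> 0" for z
    using one_le_norm_one_minus_ii_mult \<epsilon> that by (simp add: d_def)
  then have d_nonzero: "d z \<noteq> 0" if "Im z \<ge> 0" for z
    using that by fastforce
  have "norm (\<phi> z0 / d z0) \<le> 1"
  proof (rule maximum_modulus_upper_half_plane_outside_ball
      [where \<psi> = "\<lambda>z. \<phi> z / d z" and R = "(\<bar>M\<bar> + 1) / \<epsilon>"])
    show "continuous_on {z. Im z \<ge> 0} (\<lambda>z. \<phi> z / d z)"
      using d_nonzero unfolding d_def by (intro continuous_intros cont) auto
    show "(\<lambda>z. \<phi> z / d z) holomorphic_on {z. Im z > 0}"
      using d_nonzero unfolding d_def by (intro holomorphic_intros holo) auto
    show "norm (\<phi> z / d z) \<le> 1" if "Im z = 0" for z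
      using that real_axis[of z] d_ge_1[of z] by (simp add: norm_divide divide_le_eq_1)
    show "norm (\<phi> z / d z) \<le> 1" if "Im z > 0" and "(\<bar>M\<bar> + 1) / \<epsilon> \<le> norm z" for z
    proof -
      have "\<bar>M\<bar> + 1 \<le> \<epsilon> * norm z"
        using that(2) \<epsilon> by (simp add: field_simps)
      moreover have "\<epsilon> * norm z - 1 \<le> norm (d z)"
        using norm_triangle_ineq2[of "\<i> * \<epsilon> * z" 1] \<epsilon>
        by (simp add: d_def norm_mult norm_minus_commute)
      ultimately have "norm (\<phi> z) \<le> norm (d z)"
        using bnd[OF that(1)] by linarith
      then show ?thesis
        using d_nonzero[of z] that(1) by (simp add: norm_divide divide_le_eq_1)
    qed
  qed (rule z0)
  then have "norm (\<phi> z0) \<le> norm (d z0)"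
    using d_nonzero[of z0] z0 by (simp add: norm_divide divide_le_eq_1)
  then show ?thesis
    by (simp add: d_def)
qed

lemma phragmen_lindelof_upper_half_plane:
  fixes \<phi> :: "complex \<Rightarrow> complex" and M :: real
  assumes "continuous_on {z. Im z \<ge> 0} \<phi>"
    and "\<phi> holomorphic_on {z. Im z > 0}"
    and "\<And>z. Im z > 0 \<Longrightarrow> norm (\<phi> z) \<le> M"
    and "\<And>z. Im z = 0 \<Longrightarrow> norm (\<phi> z) \<le> 1"
    and z0: "Im z0 > 0"
  shows "norm (\<phi> z0) \<le> 1"
proof (rule field_le_epsilon)
  fix e :: real assume e: "e > 0"
  define \<epsilon> where "\<epsilon> = e / (norm z0 + 1)"
  have \<epsilon>: "\<epsilon> > 0" "\<epsilon> * norm z0 \<le> e"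
    using e by (auto simp: \<epsilon>_def field_simps add_pos_nonneg)
  have "norm (\<phi> z0) \<le> norm (1 - \<i> * \<epsilon> * z0)"
    using phragmen_lindelof_upper_half_plane_damped[OF assms(1-4) \<epsilon>(1) z0] .
  also have "\<dots> \<le> 1 + \<epsilon> * norm z0"
    using norm_triangle_ineq4[of 1 "\<i> * \<epsilon> * z0"] \<epsilon> by (simp add: norm_mult)
  finally show "norm (\<phi> z0) \<le> 1 + e"
    using \<epsilon> by linarith
qed

lemma islimpt_upper_half_plane:
  assumes "Im z \<ge> 0"
  shows "z islimpt {w. Im w > 0}"
  unfolding islimpt_approachable
proof (intro allI impI)
  fix e :: real assume "e > 0"
  then show "\<exists>w\<in>{w. Im w > 0}. w \<noteq> z \<and> dist w z < e"
    using assms by (intro bexI[of _ "z + \<i> * of_real (e / 2)"]) (auto simp: dist_norm norm_mult)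
qed

lemma islimpt_real_axis:
  assumes "Im z = 0"
  shows "z islimpt {w. Im w = 0}"
  unfolding islimpt_approachable
proof (intro allI impI)
  fix e :: real assume "e > 0"
  then show "\<exists>w\<in>{w. Im w = 0}. w \<noteq> z \<and> dist w z < e"
    using assms by (intro bexI[of _ "z + of_real (e / 2)"]) (auto simp: dist_norm)
qed

lemma Lim_norm_ubound_islimpt:
  assumes "(q \<longlongrightarrow> c) (at z)" and "z islimpt T" and "\<And>w. w \<in> T \<Longrightarrow> norm (q w) \<le> K"
  shows "norm c \<le> K"
proof (rule Lim_norm_ubound)
  show "\<not> trivial_limit (at z within T)"
    using assms(2) trivial_limit_within by blast
  show "(q \<longlongrightarrow> c) (at z within T)"
    using assms(1) by (rule tendsto_mono[OF at_le, rotated]) simp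
  show "eventually (\<lambda>w. norm (q w) \<le> K) (at z within T)"
    using assms(3) by (auto simp: eventually_at_filter)
qed

lemma remove_sings_analytic_at_if_bounded:
  fixes q :: "complex \<Rightarrow> complex"
  assumes mero: "q meromorphic_on {z}" and limpt: "z islimpt S"
    and bounded: "\<And>w. w \<in> S \<Longrightarrow> norm (q w) \<le> K"
  shows "remove_sings q analytic_on {z}" and "(q \<longlongrightarrow> remove_sings q z) (at z)"
proof -
  have "\<not> is_pole q z"
  proof
    assume "is_pole q z"
    then have "filterlim q at_infinity (at z within S)"
      unfolding is_pole_def by (rule filterlim_mono) (auto simp: at_le)
    then have "eventually (\<lambda>w. \<bar>K\<bar> + 1 \<le> norm (q w)) (at z within S)"
      by (auto simp: filterlim_at_infinity[OF order_refl])
    moreover have "eventually (\<lambda>w. w \<in> S) (at z within S)"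
      by (simp add: eventually_at_filter)
    ultimately have "eventually (\<lambda>w. False) (at z within S)"
      by eventually_elim (use bounded in fastforce)
    then show False
      using limpt trivial_limit_within by (auto simp: trivial_limit_def)
  qed
  then obtain c where c: "(q \<longlongrightarrow> c) (at z)"
    using meromorphic_on_not_essential[OF mero] unfolding not_essential_def by blast
  show "remove_sings q analytic_on {z}"
    using meromorphic_on_isolated_singularity[OF mero] c by (rule remove_sings_analytic_at)
  show "(q \<longlongrightarrow> remove_sings q z) (at z)"
    using c remove_sings_eqI[OF c] by simp
qed

lemma quotient_extends_to_closed_upper_half_plane:
  fixes A B :: "complex \<Rightarrow> complex" and C :: real
  assumes A: "A holomorphic_on UNIV" and B: "B holomorphic_on UNIV"
    and upper: "\<And>z. Im z > 0 \<Longrightarrow> norm (A z) \<le> C * norm (B z)"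
    and real_axis: "\<And>x. Im x = 0 \<Longrightarrow> norm (A x / B x) \<le> 1"
  obtains \<rho> where "\<rho> analytic_on {z. Im z \<ge> 0}"
    and "\<And>z. Im z > 0 \<Longrightarrow> norm (\<rho> z) \<le> \<bar>C\<bar>"
    and "\<And>z. Im z = 0 \<Longrightarrow> norm (\<rho> z) \<le> 1"
    and "\<And>z. B z \<noteq> 0 \<Longrightarrow> \<rho> z = A z / B z"
proof
  define q where "q = (\<lambda>z. A z / B z)"
  have A': "A analytic_on UNIV" and B': "B analytic_on UNIV"
    using A B by (simp_all add: analytic_on_open)
  have "q meromorphic_on UNIV"
    unfolding q_def by (intro meromorphic_on_divide analytic_on_imp_meromorphic_on A' B')
  then have mero: "q meromorphic_on {z}" for z
    using meromorphic_on_subset by blast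
  have q_upper: "norm (q z) \<le> \<bar>C\<bar>" if "z \<in> {z. Im z > 0}" for z
  proof (cases "B z = 0")
    case False
    have "norm (A z) \<le> \<bar>C\<bar> * norm (B z)"
      using upper[of z] that mult_right_mono[OF abs_ge_self norm_ge_zero, of C "B z"] by simp
    then show ?thesis
      using False by (simp add: q_def norm_divide divide_le_eq)
  qed (simp add: q_def)
  have q_real: "norm (q z) \<le> 1" if "z \<in> {z. Im z = 0}" for z
    using real_axis that by (simp add: q_def)
  have remove: "remove_sings q analytic_on {z}" "(q \<longlongrightarrow> remove_sings q z) (at z)"
    if "Im z \<ge> 0" for z
    using remove_sings_analytic_at_if_bounded[OF mero islimpt_upper_half_plane[OF that] q_upper]
    by blast+
  show "remove_sings q analytic_on {z. Im z \<ge> 0}"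
    using remove(1) analytic_on_analytic_at by blast
  show "norm (remove_sings q z) \<le> \<bar>C\<bar>" if "Im z > 0" for z
    using that by (intro Lim_norm_ubound_islimpt[OF remove(2) islimpt_upper_half_plane q_upper]) auto
  show "norm (remove_sings q z) \<le> 1" if "Im z = 0" for z
    using that by (intro Lim_norm_ubound_islimpt[OF remove(2) islimpt_real_axis q_real]) auto
  show "remove_sings q z = A z / B z" if "B z \<noteq> 0" for z
  proof -
    have "q analytic_on {z}"
      unfolding q_def using that A' B' by (intro analytic_on_divide) (auto intro: analytic_on_subset)
    then show ?thesis by (simp add: q_def)
  qed
qed

lemma phragmen_lindelof_quotient:
  fixes A B :: "complex \<Rightarrow> complex" and C :: real
  assumes "A holomorphic_on UNIV" and "B holomorphic_on UNIV"
    and upper: "\<And>z. Im z > 0 \<Longrightarrow> norm (A z) \<le> C * norm (B z)"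
    and "\<And>x. Im x = 0 \<Longrightarrow> norm (A x / B x) \<le> 1"
    and w: "Im w > 0"
  shows "norm (A w) \<le> norm (B w)"
proof (cases "B w = 0")
  case True
  then show ?thesis using upper[OF w] by simp
next
  case False
  obtain \<rho> where \<rho>: "\<rho> analytic_on {z. Im z \<ge> 0}"
    and bounds: "\<And>z. Im z > 0 \<Longrightarrow> norm (\<rho> z) \<le> \<bar>C\<bar>" "\<And>z. Im z = 0 \<Longrightarrow> norm (\<rho> z) \<le> 1"
    and quotient: "\<And>z. B z \<noteq> 0 \<Longrightarrow> \<rho> z = A z / B z"
    using quotient_extends_to_closed_upper_half_plane[OF assms(1-4)] by blast
  have "norm (\<rho> w) \<le> 1"
  proof (rule phragmen_lindelof_upper_half_plane[OF _ _ bounds w])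
    show "continuous_on {z. Im z \<ge> 0} \<rho>"
      using \<rho> by (intro holomorphic_on_imp_continuous_on analytic_imp_holomorphic)
    show "\<rho> holomorphic_on {z. Im z > 0}"
      using \<rho> by (rule holomorphic_on_subset[OF analytic_imp_holomorphic]) auto
  qed
  then show ?thesis
    using quotient[OF False] False by (simp add: norm_divide divide_le_eq)
qed

lemma entire_sharp:
  assumes "entire g"
  shows "entire (sharp g)"
  using assms holomorphic_on_compose_cnj_cnj[of g UNIV]
  by (simp add: entire_def sharp_def o_def image_cnj_conv_vimage_cnj)

lemma norm_sharp_of_real [simp]: "norm (sharp g (of_real x)) = norm (g (of_real x))"
  by (simp add: sharp_def)

lemma bounded_analytic_quotient_norm_le:
  assumes h: "entire h" and E: "entire E" and "bounded_analytic_quotient h E"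
    and real_axis: "\<And>x::real. norm (h x / E x) \<le> 1"
    and z: "z \<in> upper_half_plane"
  shows "norm (h z) \<le> norm (E z)"
proof -
  obtain g where "bounded (g ` upper_half_plane)"
    and h_eq: "\<And>z. z \<in> upper_half_plane \<Longrightarrow> h z = g z * E z"
    using assms(3) unfolding bounded_analytic_quotient_def by blast
  then obtain M where M: "\<And>z. z \<in> upper_half_plane \<Longrightarrow> norm (g z) \<le> M"
    by (auto simp: bounded_iff)
  show ?thesis
  proof (rule phragmen_lindelof_quotient[of h E M])
    show "norm (h v) \<le> M * norm (E v)" if "Im v > 0" for v
      using that h_eq[of v] M[of v]
      by (simp add: upper_half_plane_def norm_mult mult_right_mono)
    show "norm (h x / E x) \<le> 1" if "Im x = 0" for x
      using that real_axis[of "Re x"] complex_is_Real_iff[of x] by (metis Reals_cases Re_complex_of_real)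
  qed (use h E z in \<open>auto simp: entire_def upper_half_plane_def\<close>)
qed

lemma norm_sharp_diff_mult_le:
  fixes f E :: "complex \<Rightarrow> complex" and l v :: complex
  assumes E_cnj_le: "norm (E (cnj v)) \<le> norm (E v)"
    and f_le: "norm (f v) \<le> norm (E v)" and f_cnj_le: "norm (f (cnj v)) \<le> norm (E v)"
    and l: "norm l > 1"
  shows "norm (sharp (\<lambda>z. f z - l * E z) v) \<le> (1 + norm l) / (norm l - 1) * norm (f v - l * E v)"
    (is "_ \<le> ?C * _")
proof -
  have "norm (sharp (\<lambda>z. f z - l * E z) v) \<le> norm (f (cnj v)) + norm l * norm (E (cnj v))"
    unfolding sharp_def complex_mod_cnj using norm_triangle_ineq4 by (metis norm_mult)
  also have "\<dots> \<le> norm (E v) + norm l * norm (E v)"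
    using f_cnj_le mult_left_mono[OF E_cnj_le norm_ge_zero[of l]] by linarith
  also have "\<dots> = (1 + norm l) * norm (E v)"
    by (simp add: algebra_simps)
  also have "\<dots> = ?C * ((norm l - 1) * norm (E v))"
    using l by simp
  also have "\<dots> \<le> ?C * norm (f v - l * E v)"
  proof (rule mult_left_mono)
    have "norm l * norm (E v) \<le> norm (f v - l * E v) + norm (f v)"
      using norm_triangle_ineq2[of "l * E v" "f v"] norm_minus_commute[of "l * E v" "f v"]
      by (simp add: norm_mult)
    then show "(norm l - 1) * norm (E v) \<le> norm (f v - l * E v)"
      using f_le by (simp add: algebra_simps)
  qed (use l in simp)
  finally show ?thesis .
qed

lemma HBbar_norm_diff_mult_cnj_le:
  fixes f E :: "complex \<Rightarrow> complex" and l :: complex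
  assumes f: "entire f" and E: "E \<in> HBbar"
    and f_le: "\<And>z. z \<in> upper_half_plane \<Longrightarrow> norm (f z) \<le> norm (E z)"
    and f_cnj_le: "\<And>z. z \<in> upper_half_plane \<Longrightarrow> norm (f (cnj z)) \<le> norm (E z)"
    and l: "norm l > 1" and w: "w \<in> upper_half_plane"
  shows "norm (f (cnj w) - l * E (cnj w)) \<le> norm (f w - l * E w)"
proof -
  define F where "F = (\<lambda>z. f z - l * E z)"
  have F: "entire F"
    using f E by (auto simp: F_def entire_def HBbar_def intro!: holomorphic_intros)
  define C where "C = (1 + norm l) / (norm l - 1)"
  have "norm (sharp F v) \<le> C * norm (F v)" if "Im v > 0" for v
    using that E f_le f_cnj_le l unfolding F_def C_def
    by (intro norm_sharp_diff_mult_le) (auto simp: HBbar_def upper_half_plane_def)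
  moreover have "norm (sharp F x / F x) \<le> 1" if "Im x = 0" for x
  proof -
    have "cnj x = x" using that by (simp add: complex_eq_iff)
    then show ?thesis by (cases "F x = 0") (simp_all add: sharp_def norm_divide)
  qed
  ultimately have "norm (sharp F w) \<le> norm (F w)"
    using F entire_sharp[OF F] w
    by (intro phragmen_lindelof_quotient[of "sharp F" F C]) (auto simp: entire_def upper_half_plane_def)
  then show ?thesis
    by (simp only: sharp_def complex_mod_cnj F_def)
qed

lemma HBbar_diff_mult:
  fixes f E :: "complex \<Rightarrow> complex" and l :: complex
  assumes f: "entire f" and E: "E \<in> HBbar"
    and f_le: "\<And>z. z \<in> upper_half_plane \<Longrightarrow> norm (f z) \<le> norm (E z)"
    and f_cnj_le: "\<And>z. z \<in> upper_half_plane \<Longrightarrow> norm (f (cnj z)) \<le> norm (E z)"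
    and l: "norm l \<ge> 1"
  shows "(\<lambda>z. f z - l * E z) \<in> HBbar"
proof -
  have "norm (f (cnj z) - l * E (cnj z)) \<le> norm (f z - l * E z)" if z: "z \<in> upper_half_plane" for z
  proof -
    define t where "t n = 1 + inverse (real (Suc n))" for n
    define ls where "ls = (\<lambda>n. of_real (t n) * l)"
    have "(\<lambda>n. of_real (t n) :: complex) \<longlonglongrightarrow> of_real 1"
      unfolding t_def by (intro tendsto_of_real LIMSEQ_inverse_real_of_nat_add)
    from tendsto_mult[OF this tendsto_const[of l]] have ls: "ls \<longlonglongrightarrow> l"
      by (simp add: ls_def)
    have "norm (ls n) > 1" for n
    proof -
      have t: "1 < t n" by (simp add: t_def)
      moreover have "t n * 1 \<le> t n * norm l"
        using t l by (intro mult_left_mono) auto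
      moreover have "norm (ls n) = t n * norm l"
        using t by (simp add: ls_def norm_mult)
      ultimately show ?thesis
        by linarith
    qed
    then have "norm (f (cnj z) - ls n * E (cnj z)) \<le> norm (f z - ls n * E z)" for n
      using HBbar_norm_diff_mult_cnj_le[OF f E f_le f_cnj_le _ z] by blast
    moreover have "(\<lambda>n. norm (f w - ls n * E w)) \<longlonglongrightarrow> norm (f w - l * E w)" for w
      by (intro tendsto_norm tendsto_diff tendsto_const tendsto_mult ls)
    ultimately show ?thesis
      by (blast intro: LIMSEQ_le)
  qed
  moreover have "(\<lambda>z. f z - l * E z) holomorphic_on UNIV"
    using f E by (auto simp: HBbar_def entire_def intro!: holomorphic_intros)
  ultimately show ?thesis
    by (simp add: HBbar_def entire_def)
qed

theorem lemma1:
  fixes E f :: "complex \<Rightarrow> complex" and l :: complex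
  assumes "E \<in> HBbar"
    and "f \<in> Hinf E"
    and "\<forall>x::real. norm (f (of_real x) / E (of_real x)) \<le> 1"
    and "norm l \<ge> 1"
  shows "(\<lambda>z. f z - l * E z) \<in> HBbar"
proof (rule HBbar_diff_mult[OF _ assms(1) _ _ assms(4)])
  have E: "entire E" and f: "entire f"
    and quotients: "bounded_analytic_quotient f E" "bounded_analytic_quotient (sharp f) E"
    using assms(1,2) by (auto simp: HBbar_def Hinf_def)
  show "entire f" by (fact f)
  show "norm (f z) \<le> norm (E z)" if "z \<in> upper_half_plane" for z
    using bounded_analytic_quotient_norm_le[OF f E quotients(1) _ that] assms(3) by blast
  show "norm (f (cnj z)) \<le> norm (E z)" if "z \<in> upper_half_plane" for z
  proof -
    have "norm (sharp f x / E x) \<le> 1" for x :: real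
      using assms(3) by (simp add: norm_divide)
    then show ?thesis
      using bounded_analytic_quotient_norm_le[OF entire_sharp[OF f] E quotients(2) _ that]
      by (simp add: sharp_def)
  qed
qed

end
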